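(* Let $C_n(a,b)$ be a connected $2$-regular circulant digraph (so $\gcd(n,a,b)=1$). Let $l\ge 1$ and $0\le k\le l$ be integers, and suppose $la+k(b-a)=\omega n$ for some integer $\omega$. Then the number of primitive periodic orbits of $C_n(a,b)$ of length $l$ with $b$-count $k$ is $$|\mathcal{P}_{l,k}(C_n(a,b))|=\frac{n}{l}\sum_{m\mid \gcd(l,k,\omega)}\mu(m)\binom{l/m}{k/m},$$ where $\mu$ is the Möbius function.
   Context: Let $n\ge 2$ and $0<a<b<n$ be integers. The directed circulant graph $C_n(a,b)$ has vertex set $\mathbb{Z}_n$ and directed bonds $(v,v+a)$ and $(v,v+b)$ for each $v\in\mathbb{Z}_n$ (addition mod $n$); the bond $(v,v+s)$ has step size $s\in\{a,b\}$. It is (strongly) connected iff $\gcd(n,a,b)=1$. A path of length $l$ is a sequence of bonds $(e_1,\dots,e_l)$ where the terminus of $e_j$ is the origin of $e_{j+1}$; its $b$-count is the number of bonds of step size $b$ in it; its step sequence is the sequence of step sizes. A circuit is a path whose last terminus equals its first origin; a path of length $l$ and $b$-count $k$ is a circuit iff $n$ divides its transit distance $(l-k)a+kb$, and the winding number is the transit distance divided by $n$. A periodic orbit is an equivalence class of circuits under cyclic rotation $\sigma(e_1,\dots,e_l)=(e_2,\dots,e_l,e_1)$; length, $b$-count and winding number are well defined on orbits. For a circuit $c$, $c^r$ denotes the concatenation of $r$ copies of $c$. A periodic orbit $p$ is primitive if there is no circuit $c_0$ and integer $r>1$ with $p=[c_0^r]$. $\mathcal{P}_{l,k}(C_n(a,b))$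 denotes the set of primitive periodic orbits of length $l$ and $b$-count $k$. *)

theory Defs
  imports Complex_Main "HOL-Computational_Algebra.Squarefree"
begin

definition moebius :: "nat \<Rightarrow> int" where
  "moebius m = (if squarefree m then (-1) ^ card (prime_factors m) else 0)"

text \<open>Bonds of C_n(a,b): a bond (v, s) with v in Z_n (represented by 0..n-1) and step size s in {a,b};
  its origin is v and its terminus is (v + s) mod n.\<close>
type_synonym bond = "nat \<times> nat"

definition is_bond :: "nat \<Rightarrow> nat \<Rightarrow> nat \<Rightarrow> bond \<Rightarrow> bool" where
  "is_bond n a b e \<longleftrightarrow> fst e < n \<and> (snd e = a \<or> snd e = b)"

definition origin :: "bond \<Rightarrow> nat" where
  "origin e = fst e"

definition terminus :: "nat \<Rightarrow> bond \<Rightarrow> nat" where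
  "terminus n e = (fst e + snd e) mod n"

definition is_path :: "nat \<Rightarrow> nat \<Rightarrow> nat \<Rightarrow> bond list \<Rightarrow> bool" where
  "is_path n a b es \<longleftrightarrow> (\<forall>e\<in>set es. is_bond n a b e) \<and>
     (\<forall>j. Suc j < length es \<longrightarrow> terminus n (es ! j) = origin (es ! Suc j))"

definition is_circuit :: "nat \<Rightarrow> nat \<Rightarrow> nat \<Rightarrow> bond list \<Rightarrow> bool" where
  "is_circuit n a b es \<longleftrightarrow> es \<noteq> [] \<and> is_path n a b es \<and> terminus n (last es) = origin (hd es)"

definition b_count :: "nat \<Rightarrow> bond list \<Rightarrow> nat" where
  "b_count b es = length (filter (\<lambda>e. snd e = b) es)"

definition orbit_of :: "bond list \<Rightarrow> bond list set" where
  "orbit_of c = {rotate i c | i. True}"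

definition periodic_orbits :: "nat \<Rightarrow> nat \<Rightarrow> nat \<Rightarrow> bond list set set" where
  "periodic_orbits n a b = {orbit_of c | c. is_circuit n a b c}"

definition primitive_orbit :: "nat \<Rightarrow> nat \<Rightarrow> nat \<Rightarrow> bond list set \<Rightarrow> bool" where
  "primitive_orbit n a b p \<longleftrightarrow>
     \<not> (\<exists>c0 r. is_circuit n a b c0 \<and> r > 1 \<and> p = orbit_of (concat (replicate r c0)))"

definition prim_orbits :: "nat \<Rightarrow> nat \<Rightarrow> nat \<Rightarrow> nat \<Rightarrow> nat \<Rightarrow> bond list set set" where
  "prim_orbits n a b l k = {p \<in> periodic_orbits n a b. primitive_orbit n a b p \<and>
     (\<forall>c\<in>p. length c = l \<and> b_count b c = k)}"

end

theory Submission
  imports Defs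
begin

text \<open>
  A primitive orbit of length \<open>l\<close> consists of exactly \<open>l\<close> circuits, the rotations of an
  aperiodic circuit, so \<open>l |P\<^sub>l\<^sub>,\<^sub>k|\<close> is the number of aperiodic circuits of length \<open>l\<close> and
  \<open>b\<close>-count \<open>k\<close>. A circuit is determined by its starting vertex and its step sequence, and every
  step sequence with \<open>k\<close> steps \<open>b\<close> closes up because its transit distance
  \<open>la + k(b - a) = \<omega>n\<close> does not depend on the order of the steps: there are \<open>n \<cdot> C(l,k)\<close>
  circuits. A circuit fixed by the rotation by \<open>l/r\<close> is the \<open>r\<close>-th power of a circuit of length
  \<open>l/r\<close>, which forces \<open>r\<close> to divide \<open>l\<close>, \<open>k\<close> and \<open>\<omega>\<close>; there are \<open>n \<cdot> C(l/r,k/r)\<close> of them.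
  Moebius inversion over the divisors of \<open>gcd(l,k,\<omega>)\<close> then counts the aperiodic circuits.
\<close>

section \<open>The Moebius function\<close>

lemma prime_factorization_prod_primes:
  assumes "finite A" "\<And>p. p \<in> A \<Longrightarrow> prime p"
  shows "prime_factorization (\<Prod>A) = mset_set (A :: nat set)"
  using prime_factorization_prod_mset_primes[of "mset_set A"] assms
  by (simp add: prod_unfold_prod_mset)

lemma squarefree_prod_prime_factors:
  assumes "squarefree (d :: nat)"
  shows "\<Prod>(prime_factors d) = d"
proof -
  have "d \<noteq> 0" using assms by (metis not_squarefree_0)
  then have "(\<Prod>p\<in>prime_factors d. p ^ multiplicity p d) = d"
    using prod_prime_factors[of d] by simp
  moreover have "multiplicity p d = 1" if "p \<in> prime_factors d" for p
    using that assms \<open>d \<noteq> 0\<close> squarefree_factorial_semiring' by blast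
  ultimately show ?thesis by simp
qed

lemma
  assumes "finite A" "\<And>p. p \<in> A \<Longrightarrow> prime p"
  shows prime_factors_prod_primes: "prime_factors (\<Prod>A) = (A :: nat set)"
    and squarefree_prod_primes: "squarefree (\<Prod>A)"
proof -
  have pf: "prime_factorization (\<Prod>A) = mset_set A"
    using prime_factorization_prod_primes assms .
  then show pfs: "prime_factors (\<Prod>A) = A" using assms by simp
  have "\<Prod>A \<noteq> 0" using assms by (metis not_prime_0 prod_zero_iff)
  moreover have "multiplicity p (\<Prod>A) = 1" if "p \<in> prime_factors (\<Prod>A)" for p
    using that pf pfs assms by (metis count_mset_set(1) count_prime_factorization_prime)
  ultimately show "squarefree (\<Prod>A)" using squarefree_factorial_semiring' by blast
qed

lemma squarefree_divisors_eq_image_Pow: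
  assumes "(m :: nat) > 0"
  shows "{d. d > 0 \<and> d dvd m \<and> squarefree d} = Prod ` Pow (prime_factors m)"
proof (intro equalityI subsetI)
  fix d assume d: "d \<in> {d. d > 0 \<and> d dvd m \<and> squarefree d}"
  then have "prime_factors d \<subseteq> prime_factors m" using assms by (intro dvd_prime_factors) auto
  then show "d \<in> Prod ` Pow (prime_factors m)"
    using squarefree_prod_prime_factors d by (metis (mono_tags) PowI image_eqI mem_Collect_eq)
next
  fix d assume "d \<in> Prod ` Pow (prime_factors m)"
  then obtain A where A: "A \<subseteq> prime_factors m" "d = \<Prod>A" by auto
  have finA: "finite A" and primeA: "\<And>p. p \<in> A \<Longrightarrow> prime p"
    using A(1) finite_subset by auto
  have "d \<noteq> 0" using A(2) finA primeA by (metis not_prime_0 prod_zero_iff)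
  moreover have "prime_factorization d \<subseteq># prime_factorization m"
    using A prime_factorization_prod_primes[OF finA primeA]
    by (intro mset_subset_eqI) (auto simp: count_mset_set')
  ultimately have "d dvd m" by (rule prime_factorization_subset_imp_dvd)
  then show "d \<in> {d. d > 0 \<and> d dvd m \<and> squarefree d}"
    using \<open>d \<noteq> 0\<close> A(2) squarefree_prod_primes[OF finA primeA] by simp
qed

lemma sum_moebius_divisors:
  assumes "(m :: nat) > 0"
  shows "(\<Sum>d | d > 0 \<and> d dvd m. moebius d) = (if m = 1 then 1 else 0)"
proof -
  let ?P = "prime_factors m"
  have factors_prod: "prime_factors (\<Prod>A) = A" if "A \<in> Pow ?P" for A
    using that by (intro prime_factors_prod_primes) (auto intro: finite_subset)
  have fin: "finite {d. d > 0 \<and> d dvd m}" using assms by (simp add: finite_divisors_nat)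
  have inj: "inj_on Prod (Pow ?P)"
    using factors_prod by (rule inj_on_inverseI)
  have "(\<Sum>d | d > 0 \<and> d dvd m. moebius d) = (\<Sum>d | d > 0 \<and> d dvd m \<and> squarefree d. (-1) ^ card (prime_factors d))"
    by (simp add: moebius_def sum.inter_filter[OF fin, symmetric] conj_assoc)
  also have "\<dots> = (\<Sum>A\<in>Pow ?P. (-1) ^ card (prime_factors (\<Prod>A)))"
    by (simp add: squarefree_divisors_eq_image_Pow[OF assms] sum.reindex[OF inj])
  also have "\<dots> = (\<Sum>A\<in>Pow ?P. (-1) ^ card A)"
    using factors_prod by simp
  also have "\<dots> = (\<Prod>p\<in>?P. 1 - 1 :: int)"
    using prod_diff_conv_sum[of ?P "\<lambda>_. 1" "\<lambda>_. 1 :: int"] by simp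
  also have "\<dots> = (if m = 1 then 1 else 0)"
    using assms by (auto simp: card_gt_0_iff prime_factorization_empty_iff)
  finally show ?thesis .
qed

section \<open>Rotations and powers of lists\<close>

lemma inj_rotate: "inj (rotate n)"
  unfolding rotate_def by (intro inj_fn inj_rotate1)

lemma rotate_mult_fixed: "rotate d xs = xs \<Longrightarrow> rotate (d * m) xs = xs"
  by (induction m) (simp_all add: rotate_rotate[symmetric] add.commute)

lemma rotate_gcd_fixed:
  assumes "d \<noteq> 0" "rotate d xs = xs" "rotate e xs = xs"
  shows "rotate (gcd d e) xs = xs"
proof -
  obtain x y where xy: "d * x = e * y + gcd d e" using bezout_nat[OF assms(1)] by blast
  have "xs = rotate (d * x) xs" using rotate_mult_fixed assms by metis
  also have "\<dots> = rotate (gcd d e) (rotate (e * y) xs)" by (simp add: xy rotate_rotate add.commute)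
  also have "\<dots> = rotate (gcd d e) xs" using rotate_mult_fixed assms by metis
  finally show ?thesis by simp
qed

lemma rotate_fixed_rotate_iff: "rotate d (rotate i xs) = rotate i xs \<longleftrightarrow> rotate d xs = xs"
  by (metis inj_rotate inj_eq rotate_rotate add.commute)

lemma rotation_period:
  assumes "xs \<noteq> []"
  obtains p where "0 < p" "p dvd length xs" "\<And>d. rotate d xs = xs \<longleftrightarrow> p dvd d"
proof -
  define p where "p = (LEAST d. 0 < d \<and> rotate d xs = xs)"
  have "0 < length xs \<and> rotate (length xs) xs = xs" using assms by simp
  then have p: "0 < p" "rotate p xs = xs"
    unfolding p_def by (metis (mono_tags, lifting) LeastI)+
  have "rotate d xs = xs \<longleftrightarrow> p dvd d" for d
  proof
    assume d: "rotate d xs = xs"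
    show "p dvd d"
    proof (cases "d = 0")
      case False
      have "rotate (gcd d p) xs = xs" using rotate_gcd_fixed[OF False d p(2)] .
      then have "p \<le> gcd d p" using p(1) unfolding p_def by (simp add: Least_le)
      then have "gcd d p = p" using p(1) by (metis dvd_imp_le gcd_dvd2 le_antisym)
      then show ?thesis by (metis gcd_dvd1)
    qed simp
  qed (use p(2) rotate_mult_fixed in blast)
  moreover have "rotate (length xs) xs = xs" by simp
  ultimately show ?thesis using that p(1) by blast
qed

definition list_pow :: "nat \<Rightarrow> 'a list \<Rightarrow> 'a list" where
  "list_pow r xs = concat (replicate r xs)"

lemma length_list_pow [simp]: "length (list_pow r xs) = r * length xs"
  by (simp add: list_pow_def length_concat sum_list_replicate)

lemma set_list_pow: "0 < r \<Longrightarrow> set (list_pow r xs) = set xs"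
  by (simp add: list_pow_def)

lemma sum_list_map_list_pow: "sum_list (map f (list_pow r xs)) = r * sum_list (map f xs)"
  unfolding list_pow_def by (induction r) auto

lemma filter_list_pow: "filter P (list_pow r xs) = list_pow r (filter P xs)"
  unfolding list_pow_def by (induction r) auto

lemma nth_list_pow: "i < r * length xs \<Longrightarrow> list_pow r xs ! i = xs ! (i mod length xs)"
proof (induction r arbitrary: i)
  case (Suc r)
  show ?case
  proof (cases "i < length xs")
    case False
    then have "i - length xs < r * length xs" using Suc.prems by auto
    then show ?thesis using False Suc.IH[of "i - length xs"] by (simp add: list_pow_def nth_append mod_if)
  qed (simp add: list_pow_def nth_append)
qed simp

lemma rotate_length_list_pow: "rotate (length xs) (list_pow r xs) = list_pow r xs"
proof (cases r)
  case (Suc s)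
  have "list_pow s xs @ xs = list_pow (Suc s) xs"
    by (simp add: list_pow_def replicate_append_same[symmetric])
  then show ?thesis using Suc by (simp add: list_pow_def rotate_append)
qed (simp add: list_pow_def)

lemma take_length_list_pow: "0 < r \<Longrightarrow> take (length xs) (list_pow r xs) = xs"
  by (cases r) (auto simp: list_pow_def)

lemma rotate_fixed_nth:
  assumes "rotate p xs = xs" "i < length xs"
  shows "xs ! i = xs ! (i mod p)"
  using assms(2)
proof (induction i rule: less_induct)
  case (less i)
  show ?case
  proof (cases "p = 0 \<or> i < p")
    case False
    have "xs ! (i - p) = rotate p xs ! (i - p)" using assms by simp
    also have "\<dots> = xs ! i" using nth_rotate[of "i - p" xs p] False less.prems by simp
    finally show ?thesis using less.IH[of "i - p"] less.prems False by (simp add: le_mod_geq)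
  qed auto
qed

lemma rotate_fixed_eq_list_pow:
  assumes "0 < p" "p dvd length xs" "rotate p xs = xs"
  shows "xs = list_pow (length xs div p) (take p xs)"
proof (rule nth_equalityI)
  fix i assume i: "i < length xs"
  then have p: "p \<le> length xs" using assms(2) by (metis dvd_imp_le gr_implies_not0 neq0_conv)
  then have "list_pow (length xs div p) (take p xs) ! i = xs ! (i mod p)"
    using nth_list_pow[of i "length xs div p" "take p xs"] i assms by (simp add: min_def)
  then show "xs ! i = list_pow (length xs div p) (take p xs) ! i"
    using rotate_fixed_nth[OF assms(3) i] by simp
next
  show "length xs = length (list_pow (length xs div p) (take p xs))"
    using assms dvd_imp_le[OF assms(2)] by (cases "xs = []") (auto simp: min_def)
qed

definition aperiodic :: "'a list \<Rightarrow> bool" where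
  "aperiodic xs \<longleftrightarrow> (\<forall>d. 0 < d \<and> d < length xs \<longrightarrow> rotate d xs \<noteq> xs)"

lemma aperiodic_rotate: "aperiodic (rotate i xs) \<longleftrightarrow> aperiodic xs"
  by (simp add: aperiodic_def rotate_fixed_rotate_iff)

lemma aperiodic_iff_period:
  assumes "c \<noteq> []" "0 < p" "p dvd length c" "\<And>d. rotate d c = c \<longleftrightarrow> p dvd d"
  shows "aperiodic c \<longleftrightarrow> p = length c"
proof
  assume aper: "aperiodic c"
  show "p = length c"
  proof (rule ccontr)
    assume "p \<noteq> length c"
    moreover have "p \<le> length c" using assms(1,3) by (simp add: dvd_imp_le)
    ultimately have "rotate p c \<noteq> c" using aper assms(2) unfolding aperiodic_def by simp
    then show False using assms(4)[of p] by simp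
  qed
next
  assume p: "p = length c"
  show "aperiodic c" unfolding aperiodic_def
  proof (intro allI impI)
    fix d assume "0 < d \<and> d < length c"
    then have "\<not> p dvd d" using p by (auto dest: dvd_imp_le)
    then show "rotate d c \<noteq> c" using assms(4) by simp
  qed
qed

lemma rotate_in_orbit_of: "rotate i c \<in> orbit_of c"
  unfolding orbit_of_def by blast

lemma in_orbit_of_self: "c \<in> orbit_of c"
  using rotate_in_orbit_of[of 0 c] by simp

lemma orbit_of_eq:
  assumes "x \<in> orbit_of c"
  shows "orbit_of x = orbit_of c"
proof -
  obtain i where x: "x = rotate i c" using assms unfolding orbit_of_def by blast
  have c: "c = rotate (length c - i mod length c) x"
  proof (cases "c = []")
    case False
    then have "(length c - i mod length c + i) mod length c = 0"
      by (metis add.commute le_add_diff_inverse2 mod_add_left_eq mod_le_divisor mod_self length_greater_0_conv)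
    then show ?thesis unfolding x rotate_rotate by simp
  qed (simp add: x)
  show ?thesis
  proof
    show "orbit_of x \<subseteq> orbit_of c"
      unfolding orbit_of_def x by (auto simp: rotate_rotate)
    show "orbit_of c \<subseteq> orbit_of x"
      unfolding orbit_of_def by (subst (1) c) (auto simp: rotate_rotate)
  qed
qed

lemma card_orbit_of_aperiodic:
  assumes "c \<noteq> []" "aperiodic c"
  shows "card (orbit_of c) = length c"
proof -
  have "orbit_of c = (\<lambda>i. rotate i c) ` {..<length c}"
  proof (rule equalityI)
    show "orbit_of c \<subseteq> (\<lambda>i. rotate i c) ` {..<length c}"
      unfolding orbit_of_def using assms(1) by (auto intro: rotate_conv_mod)
  qed (auto intro: rotate_in_orbit_of)
  moreover have "inj_on (\<lambda>i. rotate i c) {..<length c}"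
  proof (rule linorder_inj_onI')
    fix i j assume ij: "j \<in> {..<length c}" "i < j"
    then have "rotate (j - i) c \<noteq> c" using assms(2) unfolding aperiodic_def by auto
    then have "rotate i (rotate (j - i) c) \<noteq> rotate i c" using inj_rotate by (metis injD)
    then show "rotate i c \<noteq> rotate j c" using ij by (simp add: rotate_rotate)
  qed
  ultimately show ?thesis by (simp add: card_image)
qed

section \<open>Circuits\<close>

lemma is_circuit_iff:
  "is_circuit n a b c \<longleftrightarrow> c \<noteq> [] \<and> (\<forall>e\<in>set c. is_bond n a b e) \<and>
     (\<forall>j<length c. terminus n (c ! j) = origin (c ! (Suc j mod length c)))"
proof
  assume "is_circuit n a b c"
  then have ne: "c \<noteq> []" and path: "is_path n a b c" and closed: "terminus n (last c) = origin (hd c)"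
    unfolding is_circuit_def by auto
  have "terminus n (c ! j) = origin (c ! (Suc j mod length c))" if j: "j < length c" for j
  proof (cases "Suc j < length c")
    case True
    then show ?thesis using path unfolding is_path_def by simp
  next
    case False
    then have "Suc j = length c" using j by simp
    then have "j = length c - 1" "Suc j mod length c = 0" by simp_all
    then show ?thesis using closed ne by (simp add: last_conv_nth hd_conv_nth)
  qed
  then show "c \<noteq> [] \<and> (\<forall>e\<in>set c. is_bond n a b e) \<and>
     (\<forall>j<length c. terminus n (c ! j) = origin (c ! (Suc j mod length c)))"
    using ne path unfolding is_path_def by auto
next
  assume H: "c \<noteq> [] \<and> (\<forall>e\<in>set c. is_bond n a b e) \<and>
     (\<forall>j<length c. terminus n (c ! j) = origin (c ! (Suc j mod length c)))"
  then have "terminus n (last c) = origin (hd c)"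
    using H[THEN conjunct2, THEN conjunct2, rule_format, of "length c - 1"]
    by (simp add: last_conv_nth hd_conv_nth)
  then show "is_circuit n a b c" using H unfolding is_circuit_def is_path_def by auto
qed

lemma is_circuit_rotate:
  assumes "is_circuit n a b c"
  shows "is_circuit n a b (rotate d c)"
proof -
  let ?l = "length c"
  have ne: "c \<noteq> []" and succ: "\<And>j. j < ?l \<Longrightarrow> terminus n (c ! j) = origin (c ! (Suc j mod ?l))"
    using assms by (auto simp: is_circuit_iff)
  have "terminus n (rotate d c ! j) = origin (rotate d c ! (Suc j mod ?l))" if j: "j < ?l" for j
  proof -
    have "(d + Suc j mod ?l) mod ?l = Suc ((d + j) mod ?l) mod ?l"
      by (simp add: mod_add_right_eq mod_Suc_eq)
    then show ?thesis
      using succ[of "(d + j) mod ?l"] nth_rotate[OF j] nth_rotate[of "Suc j mod ?l" c d] ne by simp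
  qed
  then show ?thesis using assms by (simp add: is_circuit_iff)
qed

lemma is_circuit_list_pow:
  assumes "is_circuit n a b c" "0 < r"
  shows "is_circuit n a b (list_pow r c)"
proof -
  let ?l = "length c"
  have ne: "c \<noteq> []" and succ: "\<And>j. j < ?l \<Longrightarrow> terminus n (c ! j) = origin (c ! (Suc j mod ?l))"
    using assms by (auto simp: is_circuit_iff)
  have "terminus n (list_pow r c ! j) = origin (list_pow r c ! (Suc j mod (r * ?l)))"
    if j: "j < r * ?l" for j
  proof -
    have "Suc j mod (r * ?l) mod ?l = Suc (j mod ?l) mod ?l"
      by (simp add: mod_mod_cancel mod_Suc_eq)
    moreover have "Suc j mod (r * ?l) < r * ?l" using j by (intro mod_less_divisor) linarith
    ultimately show ?thesis using succ[of "j mod ?l"] nth_list_pow[OF j] nth_list_pow[of "Suc j mod (r * ?l)" r c] ne j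
      by simp
  qed
  moreover have "list_pow r c \<noteq> []"
    using ne assms(2) by (metis length_0_conv length_list_pow mult_is_0 not_gr0)
  ultimately show ?thesis using assms by (auto simp: is_circuit_iff set_list_pow)
qed

lemma is_circuit_take_period:
  assumes "is_circuit n a b c" "0 < p" "p dvd length c" "rotate p c = c"
  shows "is_circuit n a b (take p c)"
proof -
  let ?l = "length c"
  have ne: "c \<noteq> []" and succ: "\<And>j. j < ?l \<Longrightarrow> terminus n (c ! j) = origin (c ! (Suc j mod ?l))"
    using assms by (auto simp: is_circuit_iff)
  have p: "p \<le> ?l" using assms(3) ne by (simp add: dvd_imp_le)
  have "terminus n (c ! j) = origin (c ! (Suc j mod p))" if "j < p" for j
    using succ[of j] that p rotate_fixed_nth[OF assms(4), of "Suc j mod ?l"] ne assms(3)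
    by (simp add: mod_mod_cancel)
  then show ?thesis using assms(1) ne p assms(2)
    by (auto simp: is_circuit_iff min_def dest: in_set_takeD)
qed

lemma b_count_rotate: "b_count b (rotate d c) = b_count b c"
  unfolding b_count_def rotate_drop_take
  by (metis append_take_drop_id filter_append length_append add.commute)

lemma b_count_list_pow: "b_count b (list_pow r c) = r * b_count b c"
  by (simp add: b_count_def filter_list_pow)

lemma origin_nth_path:
  assumes "is_path n a b c" "j < length c"
  shows "origin (c ! j) = (origin (c ! 0) + sum_list (take j (map snd c))) mod n"
  using assms(2)
proof (induction j)
  case 0
  then have "c ! 0 \<in> set c" by simp
  then show ?case using assms(1) by (simp add: is_path_def is_bond_def origin_def)
next
  case (Suc j)
  have "origin (c ! Suc j) = (origin (c ! j) + snd (c ! j)) mod n"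
    using assms(1) Suc.prems by (simp add: is_path_def terminus_def origin_def)
  also have "\<dots> = (origin (c ! 0) + sum_list (take (Suc j) (map snd c))) mod n"
    using Suc by (simp add: take_Suc_conv_app_nth mod_add_left_eq add.assoc)
  finally show ?case .
qed

lemma path_eqI:
  assumes "is_path n a b c" "is_path n a b c'" "c \<noteq> []" "c' \<noteq> []"
    and "origin (hd c) = origin (hd c')" "map snd c = map snd c'"
  shows "c = c'"
proof -
  have len: "length c = length c'" using map_eq_imp_length_eq[OF assms(6)] .
  have "origin (c ! 0) = origin (c' ! 0)" using assms(3-5) by (simp add: hd_conv_nth)
  then have "origin (c ! j) = origin (c' ! j)" if "j < length c" for j
    using origin_nth_path[OF assms(1) that] origin_nth_path[OF assms(2), of j] that len assms(6)
    by simp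
  moreover have "snd (c ! j) = snd (c' ! j)" if "j < length c" for j
    using arg_cong[OF assms(6), of "\<lambda>xs. xs ! j"] that len by simp
  ultimately show ?thesis using len by (intro nth_equalityI) (simp_all add: prod_eq_iff origin_def)
qed

lemma circuit_transit_dvd:
  assumes "is_circuit n a b c"
  shows "n dvd sum_list (map snd c)"
proof -
  define l where "l = length c"
  define v where "v = origin (c ! 0)"
  have path: "is_path n a b c" and l: "0 < l" using assms unfolding is_circuit_def l_def by auto
  have split: "map snd c = take (l - 1) (map snd c) @ [snd (c ! (l - 1))]"
    using take_Suc_conv_app_nth[of "l - 1" "map snd c"] l by (simp add: l_def)
  have steps: "sum_list (map snd c) = sum_list (take (l - 1) (map snd c)) + snd (c ! (l - 1))"
    by (subst (1) split) simp
  have "v = terminus n (c ! (l - 1))"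
    using assms l by (simp add: is_circuit_iff l_def v_def)
  also have "\<dots> = (v + sum_list (map snd c)) mod n"
    using origin_nth_path[OF path, of "l - 1"] l
    by (simp add: steps terminus_def origin_def l_def v_def mod_add_left_eq add.assoc)
  finally have "(v + sum_list (map snd c)) mod n = v mod n"
    using origin_nth_path[OF path, of 0] l by (simp add: l_def v_def)
  then show ?thesis using mod_eq_dvd_iff_nat[of v "v + sum_list (map snd c)" n] by simp
qed

lemma sum_list_two_values:
  assumes "set w \<subseteq> {a, b}" "(a :: nat) \<le> b"
  shows "sum_list w = length w * a + length (filter (\<lambda>x. x = b) w) * (b - a)"
  using assms(1) by (induction w) (use assms(2) in auto)

lemma b_count_conv_steps: "b_count b c = length (filter (\<lambda>x. x = b) (map snd c))"
  unfolding b_count_def by (simp add: filter_map comp_def)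

lemma circuit_transit:
  assumes "is_circuit n a b c" "a \<le> b"
  shows "sum_list (map snd c) = length c * a + b_count b c * (b - a)"
proof -
  have "set (map snd c) \<subseteq> {a, b}"
    using assms(1) unfolding is_circuit_def is_path_def is_bond_def by auto
  then show ?thesis using sum_list_two_values assms(2) by (simp add: b_count_conv_steps)
qed

section \<open>Counting circuits\<close>

lemma card_two_letter_words:
  assumes "(a :: 'a) \<noteq> b"
  shows "card {w. length w = L \<and> set w \<subseteq> {a, b} \<and> length (filter (\<lambda>x. x = b) w) = K} = L choose K"
proof -
  let ?W = "{w. length w = L \<and> set w \<subseteq> {a, b} \<and> length (filter (\<lambda>x. x = b) w) = K}"
  let ?positions = "\<lambda>w. {i. i < L \<and> w ! i = b}"
  have count: "length (filter (\<lambda>x. x = b) w) = card (?positions w)" if "length w = L" for w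
    using that by (simp add: length_filter_conv_card)
  have "bij_betw ?positions ?W {B. B \<subseteq> {0..<L} \<and> card B = K}"
  proof (rule bij_betw_imageI)
    show "inj_on ?positions ?W"
    proof
      fix w w' assume w: "w \<in> ?W" and w': "w' \<in> ?W" and eq: "?positions w = ?positions w'"
      have "w ! i = w' ! i" if i: "i < L" for i
      proof -
        have "w ! i \<in> set w" "w' ! i \<in> set w'" using w w' i by auto
        then have "w ! i \<in> {a, b}" "w' ! i \<in> {a, b}" using w w' by blast+
        moreover have "w ! i = b \<longleftrightarrow> w' ! i = b" using eq i by blast
        ultimately show ?thesis by auto
      qed
      then show "w = w'" using w w' by (intro nth_equalityI) simp_all
    qed
    show "?positions ` ?W = {B. B \<subseteq> {0..<L} \<and> card B = K}"
    proof (intro equalityI subsetI)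
      fix B assume "B \<in> ?positions ` ?W"
      then show "B \<in> {B. B \<subseteq> {0..<L} \<and> card B = K}" using count by auto
    next
      fix B assume B: "B \<in> {B. B \<subseteq> {0..<L} \<and> card B = K}"
      define w where "w = map (\<lambda>i. if i \<in> B then b else a) [0..<L]"
      have len: "length w = L" by (simp add: w_def)
      have pos: "?positions w = B" using B assms by (auto simp: w_def split: if_splits)
      have "set w \<subseteq> {a, b}" by (auto simp: w_def)
      then have "w \<in> ?W" using len count[OF len] pos B by simp
      then show "B \<in> ?positions ` ?W" using pos by blast
    qed
  qed
  then have "card ?W = card {B. B \<subseteq> {0..<L} \<and> card B = K}" by (rule bij_betw_same_card)
  then show ?thesis using n_subsets[of "{0..<L}" K] by simp
qed

definition circuit_of_steps :: "nat \<Rightarrow> nat \<Rightarrow> nat list \<Rightarrow> bond list" where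
  "circuit_of_steps n v w = map (\<lambda>j. ((v + sum_list (take j w)) mod n, w ! j)) [0..<length w]"

lemma
  shows length_circuit_of_steps [simp]: "length (circuit_of_steps n v w) = length w"
    and map_snd_circuit_of_steps [simp]: "map snd (circuit_of_steps n v w) = w"
  by (simp_all add: circuit_of_steps_def comp_def map_nth)

lemma is_circuit_circuit_of_steps:
  assumes "w \<noteq> []" "set w \<subseteq> {a, b}" "n dvd sum_list w" "v < n"
  shows "is_circuit n a b (circuit_of_steps n v w)"
proof -
  let ?c = "circuit_of_steps n v w"
  have nth: "?c ! j = ((v + sum_list (take j w)) mod n, w ! j)" if "j < length w" for j
    using that by (simp add: circuit_of_steps_def)
  have "is_bond n a b (?c ! j)" if "j < length w" for j
  proof -
    have "w ! j \<in> {a, b}" using nth_mem[OF that] assms(2) by blast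
    then show ?thesis using that assms(4) by (auto simp: nth is_bond_def)
  qed
  then have "\<forall>e\<in>set ?c. is_bond n a b e" by (metis in_set_conv_nth length_circuit_of_steps)
  moreover have "terminus n (?c ! j) = origin (?c ! (Suc j mod length w))" if j: "j < length w" for j
  proof -
    have "terminus n (?c ! j) = (v + sum_list (take (Suc j) w)) mod n"
      using j by (simp add: nth terminus_def take_Suc_conv_app_nth mod_add_left_eq add.assoc)
    also have "\<dots> = origin (?c ! (Suc j mod length w))"
    proof (cases "Suc j < length w")
      case False
      then have "Suc j = length w" using j by simp
      then show ?thesis using assms(1,3,4) by (simp add: nth origin_def mod_add_right_eq[symmetric])
    qed (simp add: nth origin_def)
    finally show ?thesis .
  qed
  moreover have "?c \<noteq> []" using assms(1) by (simp add: circuit_of_steps_def)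
  ultimately show ?thesis by (simp add: is_circuit_iff)
qed

lemma finite_circuits_length: "finite {c. is_circuit n a b c \<and> length c = l}"
proof (rule finite_subset)
  show "{c. is_circuit n a b c \<and> length c = l} \<subseteq> {c. set c \<subseteq> {0..<n} \<times> {a, b} \<and> length c = l}"
    by (auto simp: is_circuit_def is_path_def is_bond_def)
qed (simp add: finite_lists_length_eq)

lemma card_circuits:
  assumes "0 < n" "a < b" "0 < L" "n dvd L * a + K * (b - a)"
  shows "card {c. is_circuit n a b c \<and> length c = L \<and> b_count b c = K} = n * (L choose K)"
proof -
  let ?C = "{c. is_circuit n a b c \<and> length c = L \<and> b_count b c = K}"
  let ?W = "{w. length w = L \<and> set w \<subseteq> {a, b} \<and> length (filter (\<lambda>x. x = b) w) = K}"
  let ?f = "\<lambda>c. (origin (hd c), map snd c)"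
  have "bij_betw ?f ?C ({0..<n} \<times> ?W)"
  proof (rule bij_betw_imageI)
    show "inj_on ?f ?C"
    proof (rule inj_onI)
      fix c c' assume "c \<in> ?C" "c' \<in> ?C" "?f c = ?f c'"
      then show "c = c'" unfolding is_circuit_def by (intro path_eqI[of n a b]) auto
    qed
    show "?f ` ?C = {0..<n} \<times> ?W"
    proof (rule equalityI)
      show "?f ` ?C \<subseteq> {0..<n} \<times> ?W"
      proof
        fix x assume "x \<in> ?f ` ?C"
        then obtain c where c: "is_circuit n a b c" "length c = L" "b_count b c = K" "x = ?f c"
          by blast
        then have "c \<noteq> []" and bonds: "\<forall>e\<in>set c. is_bond n a b e"
          by (simp_all add: is_circuit_iff)
        then have "origin (hd c) < n" by (simp add: is_bond_def origin_def)
        moreover have "set (map snd c) \<subseteq> {a, b}" using bonds by (auto simp: is_bond_def)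
        ultimately show "x \<in> {0..<n} \<times> ?W" using c by (simp add: b_count_conv_steps)
      qed
      show "{0..<n} \<times> ?W \<subseteq> ?f ` ?C"
      proof (rule subrelI)
        fix v w assume "(v, w) \<in> {0..<n} \<times> ?W"
        then have v: "v < n"
          and w: "length w = L" "set w \<subseteq> {a, b}" "length (filter (\<lambda>x. x = b) w) = K"
          by simp_all
        have "sum_list w = L * a + K * (b - a)" using w assms(2) sum_list_two_values by simp
        then have "is_circuit n a b (circuit_of_steps n v w)"
          using v w assms(3,4) by (intro is_circuit_circuit_of_steps) auto
        moreover have "origin (hd (circuit_of_steps n v w)) = v"
          using v w assms(3) by (simp add: circuit_of_steps_def origin_def hd_map)
        ultimately show "(v, w) \<in> ?f ` ?C"
          using w b_count_conv_steps[of b "circuit_of_steps n v w"]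
          by (intro image_eqI[where x = "circuit_of_steps n v w"]) simp_all
      qed
    qed
  qed
  then have "card ?C = card ({0..<n} \<times> ?W)" by (rule bij_betw_same_card)
  then show ?thesis using card_two_letter_words[of a b L K] assms(2) by (simp add: card_cartesian_product)
qed

section \<open>Primitive orbits\<close>

lemma primitive_orbit_iff_aperiodic:
  assumes "is_circuit n a b c"
  shows "primitive_orbit n a b (orbit_of c) \<longleftrightarrow> aperiodic c"
proof
  assume prim: "primitive_orbit n a b (orbit_of c)"
  show "aperiodic c"
  proof (rule ccontr)
    assume "\<not> aperiodic c"
    have "c \<noteq> []" using assms by (simp add: is_circuit_def)
    then obtain p where p: "0 < p" "p dvd length c" "\<And>d. rotate d c = c \<longleftrightarrow> p dvd d"
      using rotation_period by blast
    have "p \<noteq> length c" using \<open>\<not> aperiodic c\<close> aperiodic_iff_period[OF \<open>c \<noteq> []\<close> p] by simp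
    moreover have "p \<le> length c" using p(2) \<open>c \<noteq> []\<close> by (simp add: dvd_imp_le)
    ultimately have "p < length c" by simp
    have "1 < length c div p"
    proof (rule ccontr)
      assume "\<not> 1 < length c div p"
      then have "p * (length c div p) \<le> p" using mult_le_mono2[of _ 1 p] by simp
      then show False using p(2) \<open>p < length c\<close> by simp
    qed
    moreover have "is_circuit n a b (take p c)" using is_circuit_take_period[OF assms p(1,2)] p(3) by simp
    moreover have "orbit_of c = orbit_of (concat (replicate (length c div p) (take p c)))"
      using arg_cong[OF rotate_fixed_eq_list_pow[OF p(1,2)], of orbit_of] p(3)
      unfolding list_pow_def by simp
    ultimately show False using prim unfolding primitive_orbit_def by blast
  qed
next
  assume aper: "aperiodic c"
  show "primitive_orbit n a b (orbit_of c)" unfolding primitive_orbit_def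
  proof
    assume "\<exists>c0 r. is_circuit n a b c0 \<and> 1 < r \<and> orbit_of c = orbit_of (concat (replicate r c0))"
    then obtain c0 r where c0: "is_circuit n a b c0" "1 < r" "orbit_of c = orbit_of (list_pow r c0)"
      unfolding list_pow_def by blast
    have "c \<in> orbit_of (list_pow r c0)" using c0(3) in_orbit_of_self[of c] by simp
    then obtain i where c: "c = rotate i (list_pow r c0)" unfolding orbit_of_def by blast
    then have "rotate (length c0) c = c" by (simp add: rotate_fixed_rotate_iff rotate_length_list_pow)
    moreover have "0 < length c0" "length c0 < length c"
      using c0(1,2) c by (simp_all add: is_circuit_def)
    ultimately show False using aper unfolding aperiodic_def by blast
  qed
qed

definition prim_circuits :: "nat \<Rightarrow> nat \<Rightarrow> nat \<Rightarrow> nat \<Rightarrow> nat \<Rightarrow> bond list set" where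
  "prim_circuits n a b l k =
     {c. is_circuit n a b c \<and> length c = l \<and> b_count b c = k \<and> aperiodic c}"

lemma orbit_of_subset_prim_circuits:
  assumes "c \<in> prim_circuits n a b l k"
  shows "orbit_of c \<subseteq> prim_circuits n a b l k"
proof
  fix x assume "x \<in> orbit_of c"
  then obtain i where "x = rotate i c" unfolding orbit_of_def by blast
  then show "x \<in> prim_circuits n a b l k"
    using assms by (simp add: prim_circuits_def is_circuit_rotate b_count_rotate aperiodic_rotate)
qed

lemma prim_orbits_eq_image: "prim_orbits n a b l k = orbit_of ` prim_circuits n a b l k"
proof (intro equalityI subsetI)
  fix p assume p: "p \<in> prim_orbits n a b l k"
  then obtain c where c: "p = orbit_of c" "is_circuit n a b c"
    unfolding prim_orbits_def periodic_orbits_def by blast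
  then have "length c = l" "b_count b c = k" "aperiodic c"
    using p in_orbit_of_self[of c] primitive_orbit_iff_aperiodic[OF c(2)]
    unfolding prim_orbits_def by auto
  then show "p \<in> orbit_of ` prim_circuits n a b l k" using c by (auto simp: prim_circuits_def)
next
  fix p assume "p \<in> orbit_of ` prim_circuits n a b l k"
  then obtain c where c: "p = orbit_of c" "c \<in> prim_circuits n a b l k" by blast
  then have circ: "is_circuit n a b c" and "aperiodic c" by (simp_all add: prim_circuits_def)
  then have "p \<in> periodic_orbits n a b" "primitive_orbit n a b p"
    using c(1) primitive_orbit_iff_aperiodic by (auto simp: periodic_orbits_def)
  moreover have "\<forall>x\<in>p. length x = l \<and> b_count b x = k"
    using orbit_of_subset_prim_circuits[OF c(2)] c(1) by (auto simp: prim_circuits_def)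
  ultimately show "p \<in> prim_orbits n a b l k" by (simp add: prim_orbits_def)
qed

lemma card_prim_orbits: "l * card (prim_orbits n a b l k) = card (prim_circuits n a b l k)"
proof -
  let ?P = "prim_circuits n a b l k"
  have union: "\<Union>(orbit_of ` ?P) = ?P"
  proof (rule equalityI)
    show "\<Union>(orbit_of ` ?P) \<subseteq> ?P" using orbit_of_subset_prim_circuits by (rule UN_least)
    show "?P \<subseteq> \<Union>(orbit_of ` ?P)" using in_orbit_of_self by blast
  qed
  have "l * card (orbit_of ` ?P) = card (\<Union>(orbit_of ` ?P))"
  proof (rule card_partition)
    have "finite ?P"
      by (rule finite_subset[OF _ finite_circuits_length[of n a b l]]) (auto simp: prim_circuits_def)
    then show "finite (orbit_of ` ?P)" "finite (\<Union>(orbit_of ` ?P))" using union by simp_all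
  next
    fix x assume "x \<in> orbit_of ` ?P"
    then obtain c where "x = orbit_of c" "c \<in> ?P" by blast
    then show "card x = l"
      using card_orbit_of_aperiodic[of c] by (simp add: prim_circuits_def is_circuit_def)
  next
    fix x y assume "x \<in> orbit_of ` ?P" "y \<in> orbit_of ` ?P" "x \<noteq> y"
    then obtain c c' where xy: "x = orbit_of c" "y = orbit_of c'" by blast
    show "x \<inter> y = {}"
    proof (rule ccontr)
      assume "x \<inter> y \<noteq> {}"
      then obtain z where "z \<in> orbit_of c" "z \<in> orbit_of c'" using xy by blast
      then have "orbit_of c = orbit_of c'" using orbit_of_eq by metis
      then show False using xy \<open>x \<noteq> y\<close> by simp
    qed
  qed
  then show ?thesis using union by (simp add: prim_orbits_eq_image)
qed

section \<open>Moebius inversion\<close>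

lemma circuit_rotate_fixed_dvd:
  fixes \<omega> :: int
  assumes circ: "is_circuit n a b c" and "a \<le> b" "0 < n" "0 < r" "r dvd length c"
    and fixed: "rotate (length c div r) c = c"
    and transit: "int (length c) * int a + int (b_count b c) * (int b - int a) = \<omega> * int n"
  shows "r dvd b_count b c" "int r dvd \<omega>"
proof -
  let ?p = "length c div r"
  have "0 < length c" using circ by (simp add: is_circuit_def)
  then have "r \<le> length c" using assms(5) by (simp add: dvd_imp_le)
  then have p: "0 < ?p" "?p dvd length c" "length c div ?p = r"
    using assms(4,5) by (auto simp: div_greater_zero_iff div_div_eq_right)
  have c: "c = list_pow r (take ?p c)" using rotate_fixed_eq_list_pow[OF p(1,2) fixed] p(3) by simp
  then show "r dvd b_count b c" by (metis b_count_list_pow dvd_triv_left)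
  obtain t where t: "sum_list (map snd (take ?p c)) = n * t"
    using circuit_transit_dvd[OF is_circuit_take_period[OF circ p(1,2) fixed]] by blast
  have "int (r * (n * t)) = int (sum_list (map snd c))"
    using sum_list_map_list_pow[of snd r "take ?p c"] c t by metis
  also have "\<dots> = \<omega> * int n"
    using circuit_transit[OF circ assms(2)] transit assms(2) by (simp add: of_nat_diff)
  finally have "\<omega> = int r * int t" using assms(3) by (simp add: algebra_simps)
  then show "int r dvd \<omega>" by simp
qed
lemma sum_moebius_rotate_fixed:
  fixes \<omega> :: int
  assumes circ: "is_circuit n a b c" and "a < b" "0 < n"
    and transit: "int (length c) * int a + int (b_count b c) * (int b - int a) = \<omega> * int n"
  shows "(\<Sum>r | 0 < r \<and> int r dvd gcd (int (length c)) (gcd (int (b_count b c)) \<omega>).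
            if rotate (length c div r) c = c then moebius r else 0) = (if aperiodic c then 1 else 0)"
proof -
  let ?l = "length c" and ?k = "b_count b c"
  \<comment> \<open>With \<open>p\<close> the least period of \<open>c\<close> and \<open>R = l/p\<close>, the rotation by \<open>l/r\<close> fixes \<open>c\<close>
    iff \<open>r\<close> divides \<open>R\<close>, and every divisor of \<open>R\<close> divides \<open>gcd(l,k,\<omega>)\<close>.\<close>
  let ?D = "{r. 0 < r \<and> int r dvd gcd (int ?l) (gcd (int ?k) \<omega>)}"
  have "c \<noteq> []" using circ by (simp add: is_circuit_def)
  then obtain p where p: "0 < p" "p dvd ?l" "\<And>d. rotate d c = c \<longleftrightarrow> p dvd d"
    using rotation_period[OF \<open>c \<noteq> []\<close>] by blast
  define R where "R = ?l div p"
  have "0 < ?l" using \<open>c \<noteq> []\<close> by simp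
  then have "0 < R" "R dvd ?l" using p(1,2) by (auto simp: R_def div_greater_zero_iff dvd_imp_le)
  have fixed_iff: "rotate (?l div r) c = c \<longleftrightarrow> r dvd R" if "0 < r" "r dvd ?l" for r
    using that p by (simp add: R_def dvd_div_iff_mult mult.commute)
  have "{r \<in> ?D. rotate (?l div r) c = c} = {r. 0 < r \<and> r dvd R}"
  proof (intro equalityI subsetI)
    fix r assume "r \<in> {r \<in> ?D. rotate (?l div r) c = c}"
    then show "r \<in> {r. 0 < r \<and> r dvd R}" using fixed_iff by auto
  next
    fix r assume r: "r \<in> {r. 0 < r \<and> r dvd R}"
    then have "r dvd ?l" "rotate (?l div r) c = c"
      using \<open>R dvd ?l\<close> fixed_iff dvd_trans by blast+
    then have "r dvd ?k" "int r dvd \<omega>"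
      using circuit_rotate_fixed_dvd[OF circ _ assms(3) _ _ _ transit] assms(2) r by auto
    then show "r \<in> {r \<in> ?D. rotate (?l div r) c = c}"
      using r \<open>r dvd ?l\<close> \<open>rotate (?l div r) c = c\<close> by simp
  qed
  moreover have "finite ?D"
  proof (rule finite_subset)
    show "?D \<subseteq> {..?l}"
      using \<open>0 < ?l\<close> by (auto intro: dvd_imp_le)
  qed simp
  ultimately have "(\<Sum>r\<in>?D. if rotate (?l div r) c = c then moebius r else 0)
      = (\<Sum>r | 0 < r \<and> r dvd R. moebius r)"
    by (simp add: sum.inter_filter[symmetric])
  also have "\<dots> = (if aperiodic c then 1 else 0)"
    using sum_moebius_divisors[OF \<open>0 < R\<close>] aperiodic_iff_period[OF \<open>c \<noteq> []\<close> p] p(1,2)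
    by (auto simp: R_def)
  finally show ?thesis .
qed

lemma card_circuits_rotate_fixed:
  assumes "0 < n" "a < b" "0 < l" "0 < r" "r dvd l" "r dvd k"
    and "n dvd (l div r) * a + (k div r) * (b - a)"
  shows "card {c. is_circuit n a b c \<and> length c = l \<and> b_count b c = k \<and> rotate (l div r) c = c}
    = n * ((l div r) choose (k div r))"
proof -
  let ?C = "{c. is_circuit n a b c \<and> length c = l div r \<and> b_count b c = k div r}"
  let ?F = "{c. is_circuit n a b c \<and> length c = l \<and> b_count b c = k \<and> rotate (l div r) c = c}"
  have lr: "0 < l div r" "l div r dvd l" "l div (l div r) = r" "r * (l div r) = l"
    using assms(3-5) by (auto simp: div_greater_zero_iff dvd_imp_le div_div_eq_right)
  have kr: "r * (k div r) = k" using assms(6) by simp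
  have "bij_betw (list_pow r) ?C ?F"
  proof (rule bij_betw_imageI)
    show "inj_on (list_pow r) ?C"
    proof (rule inj_on_inverseI)
      fix x assume "x \<in> ?C"
      then show "take (l div r) (list_pow r x) = x" using take_length_list_pow[OF assms(4), of x] by simp
    qed
    show "list_pow r ` ?C = ?F"
    proof (intro equalityI subsetI)
      fix z assume "z \<in> list_pow r ` ?C"
      then obtain x where x: "is_circuit n a b x" "length x = l div r" "b_count b x = k div r"
        and z: "z = list_pow r x" by blast
      have "rotate (l div r) z = z" using rotate_length_list_pow[of x r] x(2) z by simp
      then show "z \<in> ?F"
        using is_circuit_list_pow[OF x(1) assms(4)] x lr(4) kr z by (simp add: b_count_list_pow)
    next
      fix z assume z: "z \<in> ?F"
      then have zF: "is_circuit n a b z" "length z = l" "b_count b z = k" "rotate (l div r) z = z"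
        by simp_all
      have "is_circuit n a b (take (l div r) z)"
        using is_circuit_take_period[OF zF(1) lr(1) _ zF(4)] lr(2) zF(2) by simp
      moreover have pow: "z = list_pow r (take (l div r) z)"
        using rotate_fixed_eq_list_pow[OF lr(1) _ zF(4)] lr(2,3) zF(2) by simp
      moreover have "length (take (l div r) z) = l div r" using zF(2) by simp
      moreover have "k = r * b_count b (take (l div r) z)"
        using arg_cong[OF pow, of "b_count b"] zF(3) by (simp add: b_count_list_pow)
      then have "b_count b (take (l div r) z) = k div r" using assms(4) by simp
      ultimately show "z \<in> list_pow r ` ?C"
        by (intro image_eqI[where x = "take (l div r) z"]) simp_all
    qed
  qed
  then have "card ?F = card ?C" by (simp add: bij_betw_same_card)
  then show ?thesis using card_circuits[OF assms(1,2) lr(1) assms(7)] by simp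
qed

lemma dvd_transit_div:
  fixes \<omega> :: int
  assumes "int l * int a + int k * (int b - int a) = \<omega> * int n" "a \<le> b"
    and "0 < r" "r dvd l" "r dvd k" "int r dvd \<omega>"
  shows "n dvd (l div r) * a + (k div r) * (b - a)"
proof -
  obtain l' k' w where "l = r * l'" "k = r * k'" "\<omega> = int r * w"
    using assms(4-6) by (metis dvdE)
  then have "int r * (int l' * int a + int k' * (int b - int a)) = int r * (w * int n)"
    using assms(1) by (simp add: algebra_simps)
  then have "int (l' * a + k' * (b - a)) = w * int n" using assms(2,3) by (simp add: of_nat_diff)
  then show ?thesis using \<open>l = r * l'\<close> \<open>k = r * k'\<close> assms(3)
    by (metis dvd_triv_right int_dvd_int_iff nonzero_mult_div_cancel_left not_gr0)
qed

lemma card_prim_circuits: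
  fixes \<omega> :: int
  assumes "0 < n" "a < b" "0 < l"
    and transit: "int l * int a + int k * (int b - int a) = \<omega> * int n"
  shows "int (card (prim_circuits n a b l k)) =
    (\<Sum>r | 0 < r \<and> int r dvd gcd (int l) (gcd (int k) \<omega>). moebius r * int (n * ((l div r) choose (k div r))))"
proof -
  let ?S = "{c. is_circuit n a b c \<and> length c = l \<and> b_count b c = k}"
  let ?D = "{r. 0 < r \<and> int r dvd gcd (int l) (gcd (int k) \<omega>)}"
  let ?fixed = "\<lambda>r c. rotate (l div r) c = c"
  have fin: "finite ?S" by (rule finite_subset[OF _ finite_circuits_length[of n a b l]]) auto
  have "prim_circuits n a b l k = {c \<in> ?S. aperiodic c}" by (auto simp: prim_circuits_def)
  then have "int (card (prim_circuits n a b l k)) = (\<Sum>c\<in>?S. if aperiodic c then 1 else 0)"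
    by (simp add: sum.inter_filter[OF fin, symmetric])
  also have "\<dots> = (\<Sum>c\<in>?S. \<Sum>r\<in>?D. if ?fixed r c then moebius r else 0)"
    using sum_moebius_rotate_fixed[OF _ assms(2,1)] transit by (intro sum.cong) auto
  also have "\<dots> = (\<Sum>r\<in>?D. \<Sum>c\<in>?S. if ?fixed r c then moebius r else 0)"
    by (rule sum.swap)
  also have "\<dots> = (\<Sum>r\<in>?D. moebius r * int (card {c \<in> ?S. ?fixed r c}))"
    by (intro sum.cong refl) (simp add: sum.inter_filter[OF fin, symmetric] mult.commute)
  also have "\<dots> = (\<Sum>r\<in>?D. moebius r * int (n * ((l div r) choose (k div r))))"
  proof (intro sum.cong refl)
    fix r assume "r \<in> ?D"
    then have r: "0 < r" "r dvd l" "r dvd k" "int r dvd \<omega>" by simp_all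
    have "{c \<in> ?S. ?fixed r c} =
        {c. is_circuit n a b c \<and> length c = l \<and> b_count b c = k \<and> rotate (l div r) c = c}"
      by auto
    then show "moebius r * int (card {c \<in> ?S. ?fixed r c}) = moebius r * int (n * ((l div r) choose (k div r)))"
      using card_circuits_rotate_fixed[OF assms(1-3) r(1-3) dvd_transit_div[OF transit _ r]] assms(2)
      by simp
  qed
  finally show ?thesis .
qed

theorem theorem1:
  fixes n a b l k :: nat and \<omega> :: int
  assumes "n \<ge> 2" and "0 < a" and "a < b" and "b < n"
    and "gcd n (gcd a b) = 1"
    and "l \<ge> 1" and "k \<le> l"
    and "int l * int a + int k * (int b - int a) = \<omega> * int n"
  shows "real (card (prim_orbits n a b l k)) =
    real n / real l *
      (\<Sum>m\<in>{m::nat. m > 0 \<and> int m dvd gcd (int l) (gcd (int k) \<omega>)}.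
          of_int (moebius m) * real ((l div m) choose (k div m)))"
proof -
  have "real l * real (card (prim_orbits n a b l k)) = of_int (int (card (prim_circuits n a b l k)))"
    using card_prim_orbits[of l n a b k] by (metis of_int_of_nat_eq of_nat_mult)
  also have "\<dots> = real n * (\<Sum>m\<in>{m::nat. m > 0 \<and> int m dvd gcd (int l) (gcd (int k) \<omega>)}.
          of_int (moebius m) * real ((l div m) choose (k div m)))"
    using assms by (simp add: card_prim_circuits of_int_sum sum_distrib_left algebra_simps)
  finally show ?thesis using assms(6) by (simp add: field_simps)
qed

end
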